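(* Let $d,N\in\mathbb{N}$, $0<\lambda<1$ and $\epsilon\ge 0$. Let $\bm G:=\frac1N \bm Z\bm M\bm Z^\top\in\mathbb{R}^{(d+1)\times(d+1)}$; this matrix does not depend on $\bm\Delta$. For $i,j\in[d+1]$ and $k\in[d]$ put $$h_{i,j,k}:=\mathbb{E}_{c\sim U([d]),\,\{(\bm x_n,y_n)\}_{n=1}^{N+1}\overset{\text{i.i.d.}}{\sim}\mathcal{D}^{\rm tr}_c}\big[G_{i,j}\,(y_{N+1}x_{N+1,k}-\epsilon)\big].$$ Then the minimum value of the adversarial pretraining problem $$\min_{\bm P,\bm Q\in[0,1]^{(d+1)\times(d+1)}}\ \mathbb{E}_{c\sim U([d]),\,\{(\bm x_n,y_n)\}_{n=1}^{N+1}\overset{\text{i.i.d.}}{\sim}\mathcal{D}^{\rm tr}_c}\Big[\max_{\|\bm\Delta\|_\infty\le\epsilon}-y_{N+1}[f(\bm Z;\bm P,\bm Q)]_{d+1,N+1}\Big]$$ equals $$-\max_{\bm b\in\{0,1\}^{d+1}}\ \sum_{j=1}^{d+1}\sum_{k=1}^{d}\max\Big(0,\ \sum_{i=1}^{d+1} b_i\,h_{i,j,k}\Big).$$ Moreover, if $\bm b^\star\in\{0,1\}^{d+1}$ attains this maximum, then a global minimizer of the pretraining problem is given by $\bm P=\begin{bmatrix}\bm 0_{d,d+1}\\ (\bm b^\star)^\top\end{bmatrix}$ and $\bm Q=\begin{bmatrix}\bm A & \bm 0_{d+1}\end{bmatrix}$, where $\bm A\in\{0,1\}^{(d+1)\times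 d}$ is defined by $A_{j,k}=1$ if $\sum_{i=1}^{d+1} b^\star_i h_{i,j,k}\ge 0$ and $A_{j,k}=0$ otherwise.
   Context: For $n\in\mathbb{N}$, $[n]:=\{1,\dots,n\}$. $U(\mathcal S)$ is the uniform distribution on a set $\mathcal S$. $\bm 1_{a}$, $\bm 1_{a,b}$, $\bm 0_a$, $\bm 0_{a,b}$, $\bm I_a$ denote the all-ones vector/matrix, the all-zeros vector/matrix and the identity. Training distributions: for $c\in[d]$ and $0<\lambda<1$, a sample $(\bm x,y)\sim\mathcal{D}^{\rm tr}_c$ with $\bm x\in\mathbb{R}^d$ is generated as follows: $y\sim U(\{\pm1\})$, $x_c=y$, and for each $i\ne c$, $x_i\sim U([0,\lambda])$ if $y=1$ and $x_i\sim U([-\lambda,0])$ if $y=-1$; given $y$, the coordinates $x_i$ are mutually independent. Transformer: given demonstrations $(\bm x_1,y_1),\dots,(\bm x_N,y_N)$, a query $\bm x_{N+1}\in\mathbb{R}^d$ and a perturbation $\bm\Delta\in\mathbb{R}^d$, let $\bm Z\in\mathbb{R}^{(d+1)\times(N+1)}$ be the matrix whose $n$-th column is $(\bm x_n^\top, y_n)^\top$ for $n\le N$ and whose last column is $((\bm x_{N+1}+\bm\Delta)^\top,0)^\top$. Let $\bm M:=\begin{bmatrix}\bm I_N&0\\0&0\end{bmatrix}\in\mathbb{R}^{(N+1)\times(N+1)}$ and, for $\bm P,\bm Q\in\mathbb{R}^{(d+1)\times(d+1)}$, $f(\bm Z;\bm P,\bm Q):=\frac1N\bm P\bm Z\bm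 M\bm Z^\top\bm Q\bm Z$. $[\cdot]_{d+1,N+1}$ denotes the $(d+1,N+1)$ entry. *)

theory Defs
  imports "HOL-Analysis.Analysis"
begin

text \<open>Matrices are functions nat => nat => real, indexed 1-based; products range over
  an explicit index set of the inner dimension.\<close>

definition mmul :: "nat set \<Rightarrow> (nat \<Rightarrow> nat \<Rightarrow> real) \<Rightarrow> (nat \<Rightarrow> nat \<Rightarrow> real) \<Rightarrow> nat \<Rightarrow> nat \<Rightarrow> real" where
  "mmul K A B = (\<lambda>i j. \<Sum>k\<in>K. A i k * B k j)"

definition mtr :: "(nat \<Rightarrow> nat \<Rightarrow> real) \<Rightarrow> nat \<Rightarrow> nat \<Rightarrow> real" where
  "mtr A = (\<lambda>i j. A j i)"

text \<open>A labelled example (x,y) with x in R^d is encoded as z :: nat => real with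
  z i = x_i for i in {1..d} and z (d+1) = y.  Training distribution D^tr_c:
  y ~ U({-1,1}), x_c = y, and for i ~= c, x_i = y * u_i with u_i ~ U([0,lam]) i.i.d.
  (i.e. x_i ~ U([0,lam]) if y = 1 and x_i ~ U([-lam,0]) if y = -1).\<close>

definition Dtr :: "nat \<Rightarrow> real \<Rightarrow> nat \<Rightarrow> (nat \<Rightarrow> real) measure" where
  "Dtr d lam c =
     distr (PiM {1..d+1} (\<lambda>i. if i = d+1 then uniform_count_measure {-1, 1}
                               else uniform_measure lborel {0..lam}))
           (PiM {1..d+1} (\<lambda>_. borel))
           (\<lambda>w. \<lambda>i\<in>{1..d+1}. if i = d+1 \<or> i = c then w (d+1) else w (d+1) * w i)"

definition sample_measure :: "nat \<Rightarrow> nat \<Rightarrow> real \<Rightarrow> nat \<Rightarrow> (nat \<Rightarrow> nat \<Rightarrow> real) measure" where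
  "sample_measure d N lam c = PiM {1..N+1} (\<lambda>_. Dtr d lam c)"

definition Etr :: "nat \<Rightarrow> nat \<Rightarrow> real \<Rightarrow> ((nat \<Rightarrow> nat \<Rightarrow> real) \<Rightarrow> real) \<Rightarrow> real" where
  "Etr d N lam g = (\<Sum>c\<in>{1..d}. integral\<^sup>L (sample_measure d N lam c) g) / real d"

definition Zmat :: "nat \<Rightarrow> nat \<Rightarrow> (nat \<Rightarrow> nat \<Rightarrow> real) \<Rightarrow> (nat \<Rightarrow> real) \<Rightarrow> nat \<Rightarrow> nat \<Rightarrow> real" where
  "Zmat d N S \<Delta> = (\<lambda>i n. if n \<le> N then S n i
                          else if i \<le> d then S (N+1) i + \<Delta> i else 0)"

definition Mmat :: "nat \<Rightarrow> nat \<Rightarrow> nat \<Rightarrow> real" where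
  "Mmat N = (\<lambda>i j. if i = j \<and> i \<le> N then 1 else 0)"

definition tf :: "nat \<Rightarrow> nat \<Rightarrow> (nat \<Rightarrow> nat \<Rightarrow> real) \<Rightarrow> (nat \<Rightarrow> nat \<Rightarrow> real) \<Rightarrow> (nat \<Rightarrow> nat \<Rightarrow> real) \<Rightarrow> nat \<Rightarrow> nat \<Rightarrow> real" where
  "tf d N Z P Q = (\<lambda>i j. (1 / real N) *
     mmul {1..d+1}
       (mmul {1..d+1}
         (mmul {1..N+1} (mmul {1..N+1} (mmul {1..d+1} P Z) (Mmat N)) (mtr Z))
         Q)
       Z i j)"

text \<open>G = (1/N) Z M Z^T (independent of the perturbation; we build Z with Delta = 0).\<close>
definition Gmat :: "nat \<Rightarrow> nat \<Rightarrow> (nat \<Rightarrow> nat \<Rightarrow> real) \<Rightarrow> nat \<Rightarrow> nat \<Rightarrow> real" where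
  "Gmat d N S = (\<lambda>i j. (1 / real N) *
     mmul {1..N+1} (mmul {1..N+1} (Zmat d N S (\<lambda>_. 0)) (Mmat N)) (mtr (Zmat d N S (\<lambda>_. 0))) i j)"

definition hcoef :: "nat \<Rightarrow> nat \<Rightarrow> real \<Rightarrow> real \<Rightarrow> nat \<Rightarrow> nat \<Rightarrow> nat \<Rightarrow> real" where
  "hcoef d N lam \<epsilon> i j k = Etr d N lam (\<lambda>S. Gmat d N S i j * (S (N+1) (d+1) * S (N+1) k - \<epsilon>))"

definition adv_loss :: "nat \<Rightarrow> nat \<Rightarrow> real \<Rightarrow> real \<Rightarrow> (nat \<Rightarrow> nat \<Rightarrow> real) \<Rightarrow> (nat \<Rightarrow> nat \<Rightarrow> real) \<Rightarrow> real" where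
  "adv_loss d N lam \<epsilon> P Q = Etr d N lam (\<lambda>S.
     SUP \<Delta>\<in>{\<Delta>. \<forall>l\<in>{1..d}. \<bar>\<Delta> l\<bar> \<le> \<epsilon>}.
       - S (N+1) (d+1) * tf d N (Zmat d N S \<Delta>) P Q (d+1) (N+1))"

definition feasible :: "nat \<Rightarrow> (nat \<Rightarrow> nat \<Rightarrow> real) set" where
  "feasible d = {P. \<forall>i\<in>{1..d+1}. \<forall>j\<in>{1..d+1}. 0 \<le> P i j \<and> P i j \<le> 1}"

definition bobj :: "nat \<Rightarrow> nat \<Rightarrow> real \<Rightarrow> real \<Rightarrow> (nat \<Rightarrow> real) \<Rightarrow> real" where
  "bobj d N lam \<epsilon> b = (\<Sum>j\<in>{1..d+1}. \<Sum>k\<in>{1..d}.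
      max 0 (\<Sum>i\<in>{1..d+1}. b i * hcoef d N lam \<epsilon> i j k))"

definition Pstar :: "nat \<Rightarrow> (nat \<Rightarrow> real) \<Rightarrow> nat \<Rightarrow> nat \<Rightarrow> real" where
  "Pstar d b = (\<lambda>i j. if i = d+1 then b j else 0)"

definition Qstar :: "nat \<Rightarrow> nat \<Rightarrow> real \<Rightarrow> real \<Rightarrow> (nat \<Rightarrow> real) \<Rightarrow> nat \<Rightarrow> nat \<Rightarrow> real" where
  "Qstar d N lam \<epsilon> b = (\<lambda>j k. if 1 \<le> k \<and> k \<le> d \<and>
        0 \<le> (\<Sum>i\<in>{1..d+1}. b i * hcoef d N lam \<epsilon> i j k) then 1 else 0)"

end

theory Submission
  imports Defs "HOL-Probability.Probability"
begin

text \<open>The perturbation only enters the query column of Z, so the prediction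
  [f(Z;P,Q)]_(d+1,N+1) is affine in \<open>\<Delta>\<close>: it equals \<open>\<Sum>\<^sub>k w\<^sub>k (x\<^sub>k + \<Delta>\<^sub>k)\<close> with
  \<open>w\<^sub>k = \<Sum>\<^sub>j Q\<^sub>j\<^sub>k \<Sum>\<^sub>i P\<^sub>d\<^sub>+\<^sub>1\<^sub>,\<^sub>i G\<^sub>i\<^sub>j\<close>, and the inner maximum over the sup-norm ball adds
  \<open>\<epsilon> \<Sum>\<^sub>k |y w\<^sub>k|\<close>. Almost surely every feature has the sign of its label and modulus at
  most one, so G has entries in [0,1] and w is nonnegative; the adversarial loss is then the
  bilinear form \<open>-\<Sum>\<^sub>j\<^sub>k Q\<^sub>j\<^sub>k \<Sum>\<^sub>i P\<^sub>d\<^sub>+\<^sub>1\<^sub>,\<^sub>i h\<^sub>i\<^sub>j\<^sub>k\<close>. Minimising entrywise over Q in [0,1]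
  leaves minus \<open>bobj\<close> of the last row of P, and \<open>bobj\<close> is convex in each coordinate, so its
  maximum over the cube [0,1]^(d+1) is attained at a vertex.\<close>

definition Dtr_base :: "nat \<Rightarrow> real \<Rightarrow> (nat \<Rightarrow> real) measure" where
  "Dtr_base d lam = PiM {1..d+1} (\<lambda>i. if i = d+1 then uniform_count_measure {-1, 1}
                                      else uniform_measure lborel {0..lam})"

definition Dtr_map :: "nat \<Rightarrow> nat \<Rightarrow> (nat \<Rightarrow> real) \<Rightarrow> nat \<Rightarrow> real" where
  "Dtr_map d c w = (\<lambda>i\<in>{1..d+1}. if i = d+1 \<or> i = c then w (d+1) else w (d+1) * w i)"

lemma Dtr_eq_distr: "Dtr d lam c = distr (Dtr_base d lam) (PiM {1..d+1} (\<lambda>_. borel)) (Dtr_map d c)"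
  unfolding Dtr_def Dtr_base_def Dtr_map_def by simp

lemma measurable_Dtr_base_component:
  "i \<in> {1..d+1} \<Longrightarrow> (\<lambda>w. w i) \<in> borel_measurable (Dtr_base d lam)"
  unfolding Dtr_base_def
  by (rule measurable_compose[OF measurable_component_singleton])
     (auto simp: measurable_def sets_uniform_count_measure space_uniform_count_measure)

lemma measurable_Dtr_map: "Dtr_map d c \<in> Dtr_base d lam \<rightarrow>\<^sub>M PiM {1..d+1} (\<lambda>_. borel)"
  unfolding Dtr_map_def
  by (rule measurable_restrict) (use measurable_Dtr_base_component in auto)

lemma prob_space_Dtr_base: "0 < lam \<Longrightarrow> prob_space (Dtr_base d lam)"
  unfolding Dtr_base_def
  by (rule prob_space_PiM) (auto intro!: prob_space_uniform_count_measure prob_space_uniform_measure)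

lemma prob_space_Dtr: "0 < lam \<Longrightarrow> prob_space (Dtr d lam c)"
  unfolding Dtr_eq_distr by (rule prob_space.prob_space_distr[OF prob_space_Dtr_base measurable_Dtr_map])

lemma prob_space_sample_measure: "0 < lam \<Longrightarrow> prob_space (sample_measure d N lam c)"
  unfolding sample_measure_def by (rule prob_space_PiM) (rule prob_space_Dtr)

lemma measurable_sample_component:
  assumes "n \<in> {1..N+1}" "i \<in> {1..d+1}"
  shows "(\<lambda>S. S n i) \<in> borel_measurable (sample_measure d N lam c)"
proof -
  have "(\<lambda>S. S n) \<in> sample_measure d N lam c \<rightarrow>\<^sub>M Dtr d lam c"
    unfolding sample_measure_def using assms(1) by (rule measurable_component_singleton)
  moreover have "(\<lambda>w. w i) \<in> borel_measurable (Dtr d lam c)"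
    unfolding Dtr_def measurable_distr_eq1 using assms(2) by (rule measurable_component_singleton)
  ultimately show ?thesis by (rule measurable_compose)
qed

definition aligned_example :: "nat \<Rightarrow> (nat \<Rightarrow> real) \<Rightarrow> bool" where
  "aligned_example d x \<longleftrightarrow> (x (d+1) = -1 \<or> x (d+1) = 1) \<and>
     (\<forall>i\<in>{1..d+1}. 0 \<le> x i * x (d+1) \<and> \<bar>x i\<bar> \<le> 1)"

lemma AE_Dtr_base:
  assumes "0 < lam"
  shows "AE w in Dtr_base d lam. (w (d+1) = -1 \<or> w (d+1) = 1) \<and> (\<forall>i\<in>{1..d}. 0 \<le> w i \<and> w i \<le> lam)"
proof -
  let ?M = "\<lambda>i. if i = d+1 then uniform_count_measure {-1, 1::real} else uniform_measure lborel {0..lam}"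
  have prob: "\<And>i. prob_space (?M i)"
    using assms by (auto intro!: prob_space_uniform_count_measure prob_space_uniform_measure)
  have "AE w in Dtr_base d lam. w (d+1) = -1 \<or> w (d+1) = 1"
    unfolding Dtr_base_def
    by (rule AE_PiM_component[where P="\<lambda>y. y = -1 \<or> y = 1", OF prob])
       (auto simp: space_uniform_count_measure)
  moreover have "AE w in Dtr_base d lam. \<forall>i\<in>{1..d}. 0 \<le> w i \<and> w i \<le> lam"
    unfolding Dtr_base_def
    by (intro AE_finite_allI AE_PiM_component[where P="\<lambda>y. 0 \<le> y \<and> y \<le> lam", OF prob])
       (auto intro!: AE_uniform_measureI)
  ultimately show ?thesis by eventually_elim auto
qed

lemma aligned_example_Dtr_map:
  assumes "w (d+1) = -1 \<or> w (d+1) = 1" "\<forall>i\<in>{1..d}. 0 \<le> w i \<and> w i \<le> 1"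
  shows "aligned_example d (Dtr_map d c w)"
proof -
  have "0 \<le> w i * w (d+1) * w (d+1) \<and> \<bar>w (d+1) * w i\<bar> \<le> 1" if "i \<in> {1..d}" for i
    using assms that by (auto simp: abs_mult)
  with assms show ?thesis
    unfolding aligned_example_def Dtr_map_def by (auto simp: le_Suc_eq mult_ac)
qed

lemma AE_Dtr_aligned:
  assumes "0 < lam" "lam \<le> 1"
  shows "AE x in Dtr d lam c. aligned_example d x"
proof -
  have "{x \<in> space (PiM {1..d+1} (\<lambda>_. borel)). aligned_example d x} \<in> sets (PiM {1..d+1} (\<lambda>_. borel))"
    unfolding aligned_example_def by measurable
  moreover have "AE w in Dtr_base d lam. aligned_example d (Dtr_map d c w)"
    using AE_Dtr_base[OF assms(1)] by eventually_elim (use assms(2) in \<open>force intro!: aligned_example_Dtr_map\<close>)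
  ultimately show ?thesis
    unfolding Dtr_eq_distr by (subst AE_distr_iff[OF measurable_Dtr_map])
qed

lemma AE_sample_aligned:
  assumes "0 < lam" "lam \<le> 1"
  shows "AE S in sample_measure d N lam c. \<forall>n\<in>{1..N+1}. aligned_example d (S n)"
  unfolding sample_measure_def
  by (intro AE_finite_allI AE_PiM_component prob_space_Dtr AE_Dtr_aligned assms) auto

declare sum.cl_ivl_Suc [simp del]

lemma mmul_Mmat:
  assumes "n \<in> {1..N+1}"
  shows "mmul {1..N+1} A (Mmat N) a n = (if n \<le> N then A a n else 0)"
proof -
  have "mmul {1..N+1} A (Mmat N) a n = (\<Sum>k\<in>{1..N+1}. if k = n then (if n \<le> N then A a n else 0) else 0)"
    unfolding mmul_def Mmat_def by (rule sum.cong) auto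
  also have "\<dots> = (if n \<le> N then A a n else 0)"
    using assms by simp
  finally show ?thesis .
qed

lemma mmul_mmul_Mmat:
  "mmul {1..N+1} (mmul {1..N+1} A (Mmat N)) B a b = (\<Sum>n\<in>{1..N}. A a n * B n b)"
proof -
  have "mmul {1..N+1} (mmul {1..N+1} A (Mmat N)) B a b = (\<Sum>n\<in>{1..N+1}. if n \<le> N then A a n * B n b else 0)"
    unfolding mmul_def[of "{1..N+1}" "mmul {1..N+1} A (Mmat N)"] by (intro sum.cong refl) (subst mmul_Mmat; simp)
  also have "\<dots> = (\<Sum>n\<in>{1..N}. A a n * B n b)"
    by (simp add: sum.cl_ivl_Suc)
  finally show ?thesis .
qed

lemma Gmat_eq: "Gmat d N S i j = (\<Sum>n\<in>{1..N}. S n i * S n j) / real N"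
  unfolding Gmat_def mmul_mmul_Mmat by (simp add: Zmat_def mtr_def)

definition query_weight :: "nat \<Rightarrow> nat \<Rightarrow> (nat \<Rightarrow> nat \<Rightarrow> real) \<Rightarrow> (nat \<Rightarrow> nat \<Rightarrow> real)
    \<Rightarrow> (nat \<Rightarrow> nat \<Rightarrow> real) \<Rightarrow> nat \<Rightarrow> real" where
  "query_weight d N P Q S k = (\<Sum>j\<in>{1..d+1}. Q j k * (\<Sum>i\<in>{1..d+1}. P (d+1) i * Gmat d N S i j))"

lemma tf_query_entry:
  assumes "1 \<le> N"
  shows "tf d N (Zmat d N S \<Delta>) P Q (d+1) (N+1)
    = (\<Sum>k\<in>{1..d}. query_weight d N P Q S k * (S (N+1) k + \<Delta> k))"
proof -
  let ?Z = "Zmat d N S \<Delta>"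
  let ?C = "mmul {1..N+1} (mmul {1..N+1} (mmul {1..d+1} P ?Z) (Mmat N)) (mtr ?Z)"
  have C: "?C a b = real N * (\<Sum>i\<in>{1..d+1}. P a i * Gmat d N S i b)" for a b
  proof -
    have "?C a b = (\<Sum>n\<in>{1..N}. \<Sum>i\<in>{1..d+1}. P a i * S n i * S n b)"
      unfolding mmul_mmul_Mmat
      by (rule sum.cong) (auto simp: mmul_def Zmat_def mtr_def sum_distrib_right)
    also have "\<dots> = (\<Sum>i\<in>{1..d+1}. P a i * (\<Sum>n\<in>{1..N}. S n i * S n b))"
      by (subst sum.swap) (simp add: sum_distrib_left mult.assoc)
    also have "\<dots> = (\<Sum>i\<in>{1..d+1}. P a i * (real N * Gmat d N S i b))"
      using assms by (simp add: Gmat_eq)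
    finally show ?thesis
      by (simp add: sum_distrib_left mult_ac)
  qed
  have "tf d N ?Z P Q (d+1) (N+1)
      = (\<Sum>k\<in>{1..d+1}. (\<Sum>j\<in>{1..d+1}. ?C (d+1) j * Q j k) * ?Z k (N+1)) / real N"
    unfolding tf_def mmul_def[of "{1..d+1}" "mmul {1..d+1} ?C Q"]
    unfolding mmul_def[of "{1..d+1}" ?C Q] by (simp add: divide_inverse mult.commute)
  also have "\<dots> = (\<Sum>k\<in>{1..d}. (\<Sum>j\<in>{1..d+1}. ?C (d+1) j * Q j k) * (S (N+1) k + \<Delta> k)) / real N"
    \<comment> \<open>the label entry of the query column is 0\<close>
    by (simp add: Zmat_def sum.cl_ivl_Suc)
  also have "\<dots> = (\<Sum>k\<in>{1..d}. (\<Sum>j\<in>{1..d+1}.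
      real N * (\<Sum>i\<in>{1..d+1}. P (d+1) i * Gmat d N S i j) * Q j k) * (S (N+1) k + \<Delta> k)) / real N"
    by (simp only: C)
  also have "\<dots> = (\<Sum>k\<in>{1..d}. query_weight d N P Q S k * (S (N+1) k + \<Delta> k))"
    using assms
    by (simp add: query_weight_def sum_divide_distrib sum_distrib_left mult_ac)
  finally show ?thesis .
qed

lemma aligned_example_mult_bounds:
  assumes "aligned_example d x" "i \<in> {1..d+1}" "j \<in> {1..d+1}"
  shows "0 \<le> x i * x j \<and> x i * x j \<le> 1"
proof -
  have y: "x (d+1) * x (d+1) = 1" and s: "0 \<le> x i * x (d+1)" "0 \<le> x j * x (d+1)"
    and b: "\<bar>x i\<bar> \<le> 1" "\<bar>x j\<bar> \<le> 1"
    using assms unfolding aligned_example_def by auto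
  have "x i * x j = (x i * x (d+1)) * (x j * x (d+1))"
    using y by (simp add: algebra_simps)
  then have "0 \<le> x i * x j"
    using s by (metis mult_nonneg_nonneg)
  moreover have "\<bar>x i * x j\<bar> \<le> 1"
    using b by (simp add: abs_mult mult_le_one)
  ultimately show ?thesis by simp
qed

lemma Gmat_bounds:
  assumes "\<forall>n\<in>{1..N+1}. aligned_example d (S n)" "1 \<le> N" "i \<in> {1..d+1}" "j \<in> {1..d+1}"
  shows "0 \<le> Gmat d N S i j \<and> Gmat d N S i j \<le> 1"
proof -
  have t: "0 \<le> S n i * S n j \<and> S n i * S n j \<le> 1" if "n \<in> {1..N}" for n
    using aligned_example_mult_bounds[of d "S n" i j] assms that by auto
  have "0 \<le> (\<Sum>n\<in>{1..N}. S n i * S n j)"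
    using t by (intro sum_nonneg) auto
  moreover have "(\<Sum>n\<in>{1..N}. S n i * S n j) \<le> real N"
    using sum_mono[of "{1..N}" "\<lambda>n. S n i * S n j" "\<lambda>_. 1"] t by simp
  ultimately show ?thesis
    using assms(2) by (simp add: Gmat_eq)
qed

lemma measurable_Gmat:
  assumes "i \<in> {1..d+1}" "j \<in> {1..d+1}"
  shows "(\<lambda>S. Gmat d N S i j) \<in> borel_measurable (sample_measure d N lam c)"
  unfolding Gmat_eq using assms
  by (intro borel_measurable_divide borel_measurable_const borel_measurable_sum borel_measurable_times
      measurable_sample_component) auto

definition hcoef_integrand :: "nat \<Rightarrow> nat \<Rightarrow> real \<Rightarrow> nat \<Rightarrow> nat \<Rightarrow> nat \<Rightarrow> (nat \<Rightarrow> nat \<Rightarrow> real) \<Rightarrow> real" where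
  "hcoef_integrand d N \<epsilon> i j k S = Gmat d N S i j * (S (N+1) (d+1) * S (N+1) k - \<epsilon>)"

lemma hcoef_eq_Etr: "hcoef d N lam \<epsilon> i j k = Etr d N lam (hcoef_integrand d N \<epsilon> i j k)"
  unfolding hcoef_def hcoef_integrand_def ..

lemma measurable_hcoef_integrand:
  assumes "i \<in> {1..d+1}" "j \<in> {1..d+1}" "k \<in> {1..d}"
  shows "hcoef_integrand d N \<epsilon> i j k \<in> borel_measurable (sample_measure d N lam c)"
  unfolding hcoef_integrand_def[abs_def] using assms
  by (intro borel_measurable_times borel_measurable_diff borel_measurable_const measurable_Gmat
      measurable_sample_component) auto

lemma integrable_hcoef_integrand:
  assumes "0 < lam" "lam \<le> 1" "1 \<le> N" "i \<in> {1..d+1}" "j \<in> {1..d+1}" "k \<in> {1..d}"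
  shows "integrable (sample_measure d N lam c) (hcoef_integrand d N \<epsilon> i j k)"
proof -
  interpret prob_space "sample_measure d N lam c"
    using assms(1) by (rule prob_space_sample_measure)
  show ?thesis
  proof (rule integrable_const_bound[where B="1 + \<bar>\<epsilon>\<bar>"])
    show "AE S in sample_measure d N lam c. norm (hcoef_integrand d N \<epsilon> i j k S) \<le> 1 + \<bar>\<epsilon>\<bar>"
      using AE_sample_aligned[OF assms(1,2)]
    proof eventually_elim
      case (elim S)
      have "\<bar>Gmat d N S i j\<bar> \<le> 1"
        using Gmat_bounds[OF elim assms(3-5)] by simp
      moreover have "\<bar>S (N+1) (d+1) * S (N+1) k - \<epsilon>\<bar> \<le> 1 + \<bar>\<epsilon>\<bar>"
        using aligned_example_mult_bounds[of d "S (N+1)" "d+1" k] elim assms(6) by auto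
      ultimately show ?case
        unfolding hcoef_integrand_def real_norm_def abs_mult
        using mult_mono[of _ 1 _ "1 + \<bar>\<epsilon>\<bar>"] by simp
    qed
  qed (use assms in \<open>auto intro: measurable_hcoef_integrand\<close>)
qed

lemma SUP_box_affine:
  fixes a :: "'a \<Rightarrow> real"
  assumes "finite K" "0 \<le> \<epsilon>"
  shows "(SUP \<Delta>\<in>{\<Delta>. \<forall>l\<in>K. \<bar>\<Delta> l\<bar> \<le> \<epsilon>}. r + (\<Sum>k\<in>K. a k * \<Delta> k)) = r + \<epsilon> * (\<Sum>k\<in>K. \<bar>a k\<bar>)"
    (is "Sup (_ ` ?B) = _")
proof (rule cSup_eq_maximum)
  have "r + \<epsilon> * (\<Sum>k\<in>K. \<bar>a k\<bar>) = r + (\<Sum>k\<in>K. a k * (\<epsilon> * sgn (a k)))"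
    by (auto simp: sum_distrib_left sgn_if abs_if intro!: sum.cong)
  moreover have "(\<lambda>k. \<epsilon> * sgn (a k)) \<in> ?B"
    using assms by (auto simp: abs_mult abs_sgn_eq)
  ultimately show "r + \<epsilon> * (\<Sum>k\<in>K. \<bar>a k\<bar>) \<in> (\<lambda>\<Delta>. r + (\<Sum>k\<in>K. a k * \<Delta> k)) ` ?B"
    by (rule image_eqI)
next
  fix y assume "y \<in> (\<lambda>\<Delta>. r + (\<Sum>k\<in>K. a k * \<Delta> k)) ` ?B"
  then obtain \<Delta> where \<Delta>: "\<Delta> \<in> ?B" and y: "y = r + (\<Sum>k\<in>K. a k * \<Delta> k)"
    by blast
  have "a k * \<Delta> k \<le> \<epsilon> * \<bar>a k\<bar>" if "k \<in> K" for k
  proof -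
    have "a k * \<Delta> k \<le> \<bar>a k\<bar> * \<bar>\<Delta> k\<bar>"
      by (simp add: abs_mult[symmetric])
    also have "\<dots> \<le> \<bar>a k\<bar> * \<epsilon>"
      using \<Delta> that by (intro mult_left_mono) auto
    finally show ?thesis by (simp add: mult.commute)
  qed
  then show "y \<le> r + \<epsilon> * (\<Sum>k\<in>K. \<bar>a k\<bar>)"
    unfolding y sum_distrib_left by (simp add: sum_mono)
qed

lemma worst_case_margin:
  assumes "1 \<le> N" "0 \<le> \<epsilon>"
  shows "(SUP \<Delta>\<in>{\<Delta>. \<forall>l\<in>{1..d}. \<bar>\<Delta> l\<bar> \<le> \<epsilon>}. - S (N+1) (d+1) * tf d N (Zmat d N S \<Delta>) P Q (d+1) (N+1))
    = - S (N+1) (d+1) * (\<Sum>k\<in>{1..d}. query_weight d N P Q S k * S (N+1) k)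
      + \<epsilon> * (\<Sum>k\<in>{1..d}. \<bar>S (N+1) (d+1) * query_weight d N P Q S k\<bar>)"
proof -
  let ?y = "S (N+1) (d+1)" and ?w = "query_weight d N P Q S"
    and ?B = "{\<Delta>. \<forall>l\<in>{1..d}. \<bar>\<Delta> l\<bar> \<le> \<epsilon>}"
  have affine: "- ?y * tf d N (Zmat d N S \<Delta>) P Q (d+1) (N+1)
      = - ?y * (\<Sum>k\<in>{1..d}. ?w k * S (N+1) k) + (\<Sum>k\<in>{1..d}. (- ?y * ?w k) * \<Delta> k)" for \<Delta>
    unfolding tf_query_entry[OF assms(1)]
    by (simp add: sum_distrib_left sum.distrib[symmetric] algebra_simps)
  have "(SUP \<Delta>\<in>?B. - ?y * tf d N (Zmat d N S \<Delta>) P Q (d+1) (N+1))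
      = (SUP \<Delta>\<in>?B. - ?y * (\<Sum>k\<in>{1..d}. ?w k * S (N+1) k) + (\<Sum>k\<in>{1..d}. (- ?y * ?w k) * \<Delta> k))"
    by (simp only: affine)
  also have "\<dots> = - ?y * (\<Sum>k\<in>{1..d}. ?w k * S (N+1) k) + \<epsilon> * (\<Sum>k\<in>{1..d}. \<bar>- ?y * ?w k\<bar>)"
    using assms(2) by (intro SUP_box_affine) auto
  finally show ?thesis
    by simp
qed

lemma query_weight_nonneg:
  assumes "\<forall>n\<in>{1..N+1}. aligned_example d (S n)" "1 \<le> N" "P \<in> feasible d" "Q \<in> feasible d"
    and "k \<in> {1..d}"
  shows "0 \<le> query_weight d N P Q S k"
  unfolding query_weight_def using assms Gmat_bounds[OF assms(1,2)]
  by (intro sum_nonneg mult_nonneg_nonneg) (auto simp: feasible_def)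

lemma worst_case_margin_aligned:
  assumes "\<forall>n\<in>{1..N+1}. aligned_example d (S n)" "1 \<le> N" "0 \<le> \<epsilon>"
    and "P \<in> feasible d" "Q \<in> feasible d"
  shows "(SUP \<Delta>\<in>{\<Delta>. \<forall>l\<in>{1..d}. \<bar>\<Delta> l\<bar> \<le> \<epsilon>}. - S (N+1) (d+1) * tf d N (Zmat d N S \<Delta>) P Q (d+1) (N+1))
    = - (\<Sum>j\<in>{1..d+1}. \<Sum>k\<in>{1..d}. Q j k * (\<Sum>i\<in>{1..d+1}. P (d+1) i * hcoef_integrand d N \<epsilon> i j k S))"
proof -
  let ?y = "S (N+1) (d+1)" and ?w = "query_weight d N P Q S"
  have "aligned_example d (S (N+1))"
    using assms(1) by simp
  then have "\<bar>?y\<bar> = 1"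
    by (auto simp: aligned_example_def)
  then have "\<bar>?y * ?w k\<bar> = ?w k" if "k \<in> {1..d}" for k
    using query_weight_nonneg[OF assms(1,2,4,5) that] by (simp add: abs_mult)
  then have "(SUP \<Delta>\<in>{\<Delta>. \<forall>l\<in>{1..d}. \<bar>\<Delta> l\<bar> \<le> \<epsilon>}. - ?y * tf d N (Zmat d N S \<Delta>) P Q (d+1) (N+1))
      = - (\<Sum>k\<in>{1..d}. ?w k * (?y * S (N+1) k - \<epsilon>))"
    unfolding worst_case_margin[OF assms(2,3)]
    by (simp add: sum_distrib_left sum_subtractf sum_negf algebra_simps)
  also have "\<dots> = - (\<Sum>j\<in>{1..d+1}. \<Sum>k\<in>{1..d}. Q j k * (\<Sum>i\<in>{1..d+1}. P (d+1) i * hcoef_integrand d N \<epsilon> i j k S))"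
    unfolding query_weight_def hcoef_integrand_def
    by (subst sum.swap) (simp add: sum_distrib_left sum_distrib_right mult_ac)
  finally show ?thesis .
qed

lemma Etr_linear:
  assumes "finite T" "\<And>c t. c \<in> {1..d} \<Longrightarrow> t \<in> T \<Longrightarrow> integrable (sample_measure d N lam c) (F t)"
  shows "Etr d N lam (\<lambda>S. \<Sum>t\<in>T. a t * F t S) = (\<Sum>t\<in>T. a t * Etr d N lam (F t))"
proof -
  have "integral\<^sup>L (sample_measure d N lam c) (\<lambda>S. \<Sum>t\<in>T. a t * F t S)
      = (\<Sum>t\<in>T. a t * integral\<^sup>L (sample_measure d N lam c) (F t))" if "c \<in> {1..d}" for c
    using assms that by (subst Bochner_Integration.integral_sum) auto
  then show ?thesis
    unfolding Etr_def
    by (simp add: sum_divide_distrib sum_distrib_left mult_ac flip: sum.swap[of _ T])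
qed

lemma Etr_cong_AE:
  assumes "\<And>c. c \<in> {1..d} \<Longrightarrow> f \<in> borel_measurable (sample_measure d N lam c)"
    and "\<And>c. c \<in> {1..d} \<Longrightarrow> g \<in> borel_measurable (sample_measure d N lam c)"
    and "\<And>c. c \<in> {1..d} \<Longrightarrow> AE S in sample_measure d N lam c. f S = g S"
  shows "Etr d N lam f = Etr d N lam g"
  unfolding Etr_def
  by (intro arg_cong[where f="\<lambda>x. x / real d"] sum.cong refl integral_cong_AE assms)

lemma measurable_worst_case_margin:
  assumes "1 \<le> N" "0 \<le> \<epsilon>"
  shows "(\<lambda>S. SUP \<Delta>\<in>{\<Delta>. \<forall>l\<in>{1..d}. \<bar>\<Delta> l\<bar> \<le> \<epsilon>}. - S (N+1) (d+1) * tf d N (Zmat d N S \<Delta>) P Q (d+1) (N+1))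
    \<in> borel_measurable (sample_measure d N lam c)"
  unfolding worst_case_margin[OF assms] query_weight_def
  by (intro borel_measurable_add borel_measurable_times borel_measurable_uminus borel_measurable_const
      borel_measurable_sum borel_measurable_abs measurable_Gmat measurable_sample_component) auto

lemma adv_loss_eq_bilinear:
  assumes "1 \<le> N" "0 < lam" "lam \<le> 1" "0 \<le> \<epsilon>" "P \<in> feasible d" "Q \<in> feasible d"
  shows "adv_loss d N lam \<epsilon> P Q
    = - (\<Sum>j\<in>{1..d+1}. \<Sum>k\<in>{1..d}. Q j k * (\<Sum>i\<in>{1..d+1}. P (d+1) i * hcoef d N lam \<epsilon> i j k))"
proof -
  let ?T = "{1..d+1} \<times> {1..d} \<times> {1..d+1}"
  let ?a = "\<lambda>(j, k, i). - (Q j k * P (d+1) i)"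
  let ?F = "\<lambda>(j, k, i). hcoef_integrand d N \<epsilon> i j k"
  have triple: "- (\<Sum>j\<in>{1..d+1}. \<Sum>k\<in>{1..d}. Q j k * (\<Sum>i\<in>{1..d+1}. P (d+1) i * g i j k))
      = (\<Sum>(j, k, i)\<in>?T. - (Q j k * P (d+1) i) * g i j k)" for g :: "nat \<Rightarrow> nat \<Rightarrow> nat \<Rightarrow> real"
  proof -
    have "- (\<Sum>j\<in>{1..d+1}. \<Sum>k\<in>{1..d}. Q j k * (\<Sum>i\<in>{1..d+1}. P (d+1) i * g i j k))
        = (\<Sum>j\<in>{1..d+1}. \<Sum>k\<in>{1..d}. \<Sum>i\<in>{1..d+1}. - (Q j k * P (d+1) i) * g i j k)"
      by (simp add: sum_distrib_left sum_negf mult_ac)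
    then show ?thesis
      by (simp only: sum.cartesian_product)
  qed
  have "adv_loss d N lam \<epsilon> P Q = Etr d N lam (\<lambda>S. \<Sum>t\<in>?T. ?a t * ?F t S)"
    unfolding adv_loss_def
  proof (rule Etr_cong_AE)
    fix c
    show "(\<lambda>S. \<Sum>t\<in>?T. ?a t * ?F t S) \<in> borel_measurable (sample_measure d N lam c)"
      by (intro borel_measurable_sum borel_measurable_times borel_measurable_const)
         (auto intro: measurable_hcoef_integrand)
    show "AE S in sample_measure d N lam c.
        (SUP \<Delta>\<in>{\<Delta>. \<forall>l\<in>{1..d}. \<bar>\<Delta> l\<bar> \<le> \<epsilon>}. - S (N+1) (d+1) * tf d N (Zmat d N S \<Delta>) P Q (d+1) (N+1))
        = (\<Sum>t\<in>?T. ?a t * ?F t S)"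
      using AE_sample_aligned[OF assms(2,3)]
    proof eventually_elim
      case (elim S)
      then show ?case
        unfolding worst_case_margin_aligned[OF elim assms(1,4,5,6)] triple by (simp add: split_def)
    qed
  qed (rule measurable_worst_case_margin[OF assms(1,4)])
  also have "\<dots> = (\<Sum>t\<in>?T. ?a t * Etr d N lam (?F t))"
    using assms by (intro Etr_linear) (auto intro: integrable_hcoef_integrand)
  also have "\<dots> = - (\<Sum>j\<in>{1..d+1}. \<Sum>k\<in>{1..d}. Q j k * (\<Sum>i\<in>{1..d+1}. P (d+1) i * hcoef d N lam \<epsilon> i j k))"
    unfolding triple by (simp add: split_def hcoef_eq_Etr)
  finally show ?thesis .
qed

lemma max_0_convex:
  fixes x y t :: real
  assumes "0 \<le> t" "t \<le> 1"
  shows "max 0 ((1 - t) * x + t * y) \<le> (1 - t) * max 0 x + t * max 0 y"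
proof -
  have "(1 - t) * x \<le> (1 - t) * max 0 x" "t * y \<le> t * max 0 y"
    using assms by (intro mult_left_mono; simp)+
  moreover have "0 \<le> (1 - t) * max 0 x + t * max 0 y"
    using assms by simp
  ultimately show ?thesis by linarith
qed

lemma bobj_convex:
  assumes "0 \<le> t" "t \<le> 1" "\<And>i. p i = (1 - t) * p0 i + t * p1 i"
  shows "bobj d N lam \<epsilon> p \<le> (1 - t) * bobj d N lam \<epsilon> p0 + t * bobj d N lam \<epsilon> p1"
proof -
  let ?L = "\<lambda>p j k. \<Sum>i\<in>{1..d+1}. p i * hcoef d N lam \<epsilon> i j k"
  have "?L p j k = (1 - t) * ?L p0 j k + t * ?L p1 j k" for j k
    unfolding assms(3) by (simp add: sum_distrib_left sum.distrib[symmetric] algebra_simps)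
  then have "bobj d N lam \<epsilon> p
      \<le> (\<Sum>j\<in>{1..d+1}. \<Sum>k\<in>{1..d}. (1 - t) * max 0 (?L p0 j k) + t * max 0 (?L p1 j k))"
    unfolding bobj_def using assms(1,2) by (simp only:) (intro sum_mono max_0_convex)
  also have "\<dots> = (1 - t) * bobj d N lam \<epsilon> p0 + t * bobj d N lam \<epsilon> p1"
    unfolding bobj_def by (simp add: sum.distrib sum_distrib_left)
  finally show ?thesis .
qed

lemma bobj_cong: "(\<And>i. i \<in> {1..d+1} \<Longrightarrow> p i = q i) \<Longrightarrow> bobj d N lam \<epsilon> p = bobj d N lam \<epsilon> q"
  unfolding bobj_def by (intro sum.cong refl arg_cong[where f="max 0"]) auto

text \<open>Induction on the set of coordinates that may still be fractional: fixing one of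
  them to \<open>0\<close> or \<open>1\<close>, whichever gives the larger value, does not decrease \<open>f\<close>.\<close>

lemma coordinatewise_convex_le_vertex:
  fixes f :: "('a \<Rightarrow> real) \<Rightarrow> real"
  assumes "finite A"
    and local: "\<And>p q. (\<And>i. i \<in> A \<Longrightarrow> p i = q i) \<Longrightarrow> f p = f q"
    and convex: "\<And>p i t. 0 \<le> t \<Longrightarrow> t \<le> 1 \<Longrightarrow> f (p(i := t)) \<le> (1 - t) * f (p(i := 0)) + t * f (p(i := 1))"
    and "\<forall>i\<in>A. 0 \<le> p i \<and> p i \<le> 1"
  shows "\<exists>b\<in>A \<rightarrow>\<^sub>E {0, 1}. f p \<le> f b"
proof -
  have "\<exists>b\<in>A \<rightarrow>\<^sub>E {0, 1}. f p \<le> f b"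
    if "finite I" "\<forall>i\<in>A. 0 \<le> p i \<and> p i \<le> 1" "\<forall>i\<in>A - I. p i = 0 \<or> p i = 1" for I p
    using that
  proof (induction I arbitrary: p rule: finite_induct)
    case empty
    then have "restrict p A \<in> A \<rightarrow>\<^sub>E {0, 1}"
      by auto
    moreover have "f p = f (restrict p A)"
      by (rule local) simp
    ultimately show ?case
      by (metis order_refl)
  next
    case (insert i I)
    show ?case
    proof (cases "i \<in> A")
      case False
      then show ?thesis
        using insert by auto
    next
      case True
      have "\<exists>b\<in>A \<rightarrow>\<^sub>E {0, 1}. f (p(i := 0)) \<le> f b" "\<exists>b\<in>A \<rightarrow>\<^sub>E {0, 1}. f (p(i := 1)) \<le> f b"
        by (rule insert.IH; use insert.prems in auto)+
      then obtain b0 b1 where b0: "b0 \<in> A \<rightarrow>\<^sub>E {0, 1}" "f (p(i := 0)) \<le> f b0"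
        and b1: "b1 \<in> A \<rightarrow>\<^sub>E {0, 1}" "f (p(i := 1)) \<le> f b1"
        by blast
      have t: "0 \<le> p i" "p i \<le> 1"
        using insert.prems True by auto
      have "f p \<le> (1 - p i) * f (p(i := 0)) + p i * f (p(i := 1))"
        using convex[OF t, of p i] by simp
      also have "\<dots> \<le> max (f b0) (f b1)"
        using b0(2) b1(2) t by (intro convex_bound_le) auto
      finally show ?thesis
        using b0(1) b1(1) by (auto simp: max_def split: if_splits)
    qed
  qed
  then show ?thesis
    using assms(1,4) by blast
qed

lemma bobj_le_Max_vertex:
  assumes "\<forall>i\<in>{1..d+1}. 0 \<le> p i \<and> p i \<le> 1"
  shows "bobj d N lam \<epsilon> p \<le> Max (bobj d N lam \<epsilon> ` ({1..d+1} \<rightarrow>\<^sub>E {0, 1}))"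
proof -
  have "\<exists>b\<in>{1..d+1} \<rightarrow>\<^sub>E {0, 1}. bobj d N lam \<epsilon> p \<le> bobj d N lam \<epsilon> b"
  proof (rule coordinatewise_convex_le_vertex[OF finite_atLeastAtMost _ _ assms])
    show "bobj d N lam \<epsilon> (q(i := t)) \<le> (1 - t) * bobj d N lam \<epsilon> (q(i := 0)) + t * bobj d N lam \<epsilon> (q(i := 1))"
      if "0 \<le> t" "t \<le> 1" for q i t
      using that by (intro bobj_convex) (auto simp: algebra_simps)
  qed (rule bobj_cong)
  then show ?thesis
    by (auto intro: Max_ge_iff[THEN iffD2] finite_PiE)
qed

lemma bilinear_le_bobj:
  assumes "Q \<in> feasible d"
  shows "(\<Sum>j\<in>{1..d+1}. \<Sum>k\<in>{1..d}. Q j k * (\<Sum>i\<in>{1..d+1}. p i * hcoef d N lam \<epsilon> i j k))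
    \<le> bobj d N lam \<epsilon> p"
  unfolding bobj_def
proof (intro sum_mono)
  fix j k assume "j \<in> {1..d+1}" "k \<in> {1..d}"
  then have "0 \<le> Q j k" "Q j k \<le> 1"
    using assms by (auto simp: feasible_def)
  then show "Q j k * (\<Sum>i\<in>{1..d+1}. p i * hcoef d N lam \<epsilon> i j k) \<le> max 0 (\<Sum>i\<in>{1..d+1}. p i * hcoef d N lam \<epsilon> i j k)"
    by (cases "0 \<le> (\<Sum>i\<in>{1..d+1}. p i * hcoef d N lam \<epsilon> i j k)")
       (auto simp: mult_left_le_one_le mult_nonneg_nonpos)
qed

lemma bilinear_Qstar_eq_bobj:
  "(\<Sum>j\<in>{1..d+1}. \<Sum>k\<in>{1..d}. Qstar d N lam \<epsilon> p j k * (\<Sum>i\<in>{1..d+1}. p i * hcoef d N lam \<epsilon> i j k))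
    = bobj d N lam \<epsilon> p"
  unfolding bobj_def by (intro sum.cong refl) (auto simp: Qstar_def)

theorem lemma3p1:
  fixes d N :: nat and lam \<epsilon> :: real
  assumes "1 \<le> d" and "1 \<le> N" and "0 < lam" and "lam < 1" and "0 \<le> \<epsilon>"
  defines "V \<equiv> Max (bobj d N lam \<epsilon> ` PiE {1..d+1} (\<lambda>_. {0, 1}))"
  shows "(\<forall>P\<in>feasible d. \<forall>Q\<in>feasible d. - V \<le> adv_loss d N lam \<epsilon> P Q)
       \<and> (\<forall>b\<in>PiE {1..d+1} (\<lambda>_. {0, 1}). bobj d N lam \<epsilon> b = V \<longrightarrow>
            Pstar d b \<in> feasible d \<and> Qstar d N lam \<epsilon> b \<in> feasible d \<and>
            adv_loss d N lam \<epsilon> (Pstar d b) (Qstar d N lam \<epsilon> b) = - V)"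
proof (intro conjI ballI impI)
  fix P Q assume P: "P \<in> feasible d" and Q: "Q \<in> feasible d"
  have "bobj d N lam \<epsilon> (\<lambda>i. P (d+1) i) \<le> V"
    unfolding V_def using P by (intro bobj_le_Max_vertex) (auto simp: feasible_def)
  then show "- V \<le> adv_loss d N lam \<epsilon> P Q"
    unfolding adv_loss_eq_bilinear[OF assms(2,3) less_imp_le[OF assms(4)] assms(5) P Q]
    using bilinear_le_bobj[OF Q, where p="\<lambda>i. P (d+1) i" and N=N and lam=lam and \<epsilon>=\<epsilon>] by linarith
next
  fix b assume b: "b \<in> {1..d+1} \<rightarrow>\<^sub>E {0, 1}" and bV: "bobj d N lam \<epsilon> b = V"
  have "b j \<in> {0, 1}" if "j \<in> {1..d+1}" for j
    using b that by blast
  then show P: "Pstar d b \<in> feasible d"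
    unfolding feasible_def Pstar_def by fastforce
  show Q: "Qstar d N lam \<epsilon> b \<in> feasible d"
    unfolding feasible_def Qstar_def by auto
  show "adv_loss d N lam \<epsilon> (Pstar d b) (Qstar d N lam \<epsilon> b) = - V"
    unfolding adv_loss_eq_bilinear[OF assms(2,3) less_imp_le[OF assms(4)] assms(5) P Q] bV[symmetric]
    using bilinear_Qstar_eq_bobj[of d N lam \<epsilon> b] by (simp add: Pstar_def)
qed

end
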